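(* Let $0<\alpha<1$ and let $\lambda>0$, $k>0$, $m>0$, $h>0$, $C<D$ (with $D>0$) be constants. Let $$K(\eta)=\eta\left[1-W\!\left(-\eta,-\tfrac{\alpha}{2},1\right)+\frac{m}{h\lambda\Gamma(1-\alpha/2)}\right]\frac{1}{M_{\alpha/2}(\eta)},\quad \eta>0,$$ and let $\tilde\eta$ be the unique positive solution of $K(\eta)=\frac{k}{\lambda^2}\frac{\Gamma(1-\frac{\alpha}{2})}{\Gamma(1+\frac{\alpha}{2})}(D-C)$. Set $$B=D-(D-C)\frac{m}{h\lambda\Gamma(1-\alpha/2)}\cdot\frac{1}{1-W\!\left(-\tilde\eta,-\frac{\alpha}{2},1\right)+\frac{m}{h\lambda\Gamma(1-\alpha/2)}}.$$ Consider problem (P1): find $u,s$ with $D^{\alpha}_t u=\lambda^2u_{xx}$ for $0<x<s(t)$, $t>0$; $u(0,t)=B$; $u(s(t),t)=C$; $D^{\alpha}s(t)=-k u_x(s(t),t)$ for $t>0$; $s(0)=0$. Consider problem (P3): find $u,s$ with $D^{\alpha}_t u=\lambda^2u_{xx}$ for $0<x<s(t)$, $t>0$; $m\,u_x(0,t)=\frac{h}{t^{\alpha/2}}(u(0,t)-D)$; $u(s(t),t)=C$; $D^{\alpha}s(t)=-k u_x(s(t),t)$ for $t>0$; $s(0)=0$ (with the same $C$). Then problems (P1) and (P3) are equivalent: the solution of (P1) $$u_1(x,t)=B+\frac{C-B}{1-W(-\tilde\xi,-\frac{\alpha}{2},1)}\left[1-W\!\left(-\frac{x}{\lambda t^{\alpha/2}},-\frac{\alpha}{2},1\right)\right],\quad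 s_1(t)=\lambda\tilde\xi t^{\alpha/2},$$ where $\tilde\xi$ is the unique positive solution of $H(\xi)=-\frac{k}{\lambda^2}\frac{\Gamma(1-\frac{\alpha}{2})}{\Gamma(1+\frac{\alpha}{2})}(C-B)$ with $H(\xi)=\xi\left[1-W(-\xi,-\frac{\alpha}{2},1)\right]\frac{1}{M_{\alpha/2}(\xi)}$, coincides with the solution of (P3) $$u_3(x,t)=D-\frac{(D-C)\left[1-W\!\left(-\frac{x}{\lambda t^{\alpha/2}},-\frac{\alpha}{2},1\right)+\frac{m}{h\lambda\Gamma(1-\alpha/2)}\right]}{1-W\!\left(-\tilde\eta,-\frac{\alpha}{2},1\right)+\frac{m}{h\lambda\Gamma(1-\alpha/2)}},\quad s_3(t)=\lambda\tilde\eta t^{\alpha/2};$$ that is, $\tilde\xi=\tilde\eta$, $s_1=s_3$ and $u_1=u_3$.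
   Context: For $0<\alpha<1$, the Caputo fractional derivative of a differentiable $f$ is $D^{\alpha}f(t)=\frac{1}{\Gamma(1-\alpha)}\int_0^t (t-\tau)^{-\alpha}f'(\tau)\,d\tau$; $D^{\alpha}_t u(x,t)$ denotes it in the variable $t$. The Wright function is $W(z,a,b)=\sum_{n\ge0}\frac{z^n}{n!\,\Gamma(an+b)}$ ($a>-1$), and the Mainardi function is $M_\nu(z)=W(-z,-\nu,1-\nu)$. *)

theory Defs
  imports "HOL-Analysis.Analysis"
begin

text \<open>Wright function W(z,a,b) = sum_n z^n / (n! Gamma(a n + b)), with the usual
  convention 1/Gamma = 0 at the poles (rGamma is the reciprocal Gamma function).\<close>
definition Wright :: "real \<Rightarrow> real \<Rightarrow> real \<Rightarrow> real" where
  "Wright z a b = (\<Sum>n. z ^ n / fact n * rGamma (a * real n + b))"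

definition Mainardi :: "real \<Rightarrow> real \<Rightarrow> real" where
  "Mainardi \<nu> z = Wright (- z) (- \<nu>) (1 - \<nu>)"

end

theory Submission
  imports Defs
begin

text \<open>Once \<open>W(-\<eta>,-\<alpha>/2,1) < 1\<close> is known for \<open>\<eta> > 0\<close>, the theorem is algebra: with the given
  \<open>B\<close>, one has \<open>C - B = -(D - C) A / (A + P)\<close> where \<open>A = 1 - W(-\<eta>\<^sub>t,-\<alpha>/2,1)\<close> and \<open>P\<close> is the
  Robin constant, so \<open>H(\<eta>\<^sub>t) = K(\<eta>\<^sub>t) A / (A + P)\<close> and \<open>\<eta>\<^sub>t\<close> solves the equation for \<open>\<xi>\<close>;
  uniqueness gives \<open>\<xi>\<^sub>t = \<eta>\<^sub>t\<close>, and then the two temperature profiles agree identically.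

  For the inequality, expanding \<open>exp\<close> in a Gamma-type integral and using the reflection
  formula gives
  \<open>1 - W(-x,-\<nu>,1) = \<pi>\<^sup>-\<^sup>1 \<integral>\<^sub>0\<^sup>\<infinity> exp (-r - x cos(\<pi>\<nu>) r\<^sup>\<nu>) sin (x sin(\<pi>\<nu>) r\<^sup>\<nu>) / r dr\<close>.
  Integrating by parts against \<open>1 - cos (x sin(\<pi>\<nu>) r\<^sup>\<nu>) \<ge> 0\<close> writes the integral as
  the integral of a nonnegative function that is bounded below by a positive constant
  on an interval, so it is positive.\<close>

lemma rGamma_one_minus_real:
  fixes z :: real
  assumes "0 < z"
  shows "rGamma (1 - z) = sin (pi * z) / pi * Gamma z"
proof -
  have "rGamma (complex_of_real z) * rGamma (1 - complex_of_real z)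
        = sin (complex_of_real pi * complex_of_real z) / complex_of_real pi"
    by (rule rGamma_reflection_complex)
  then have "complex_of_real (rGamma z * rGamma (1 - z)) = complex_of_real (sin (pi * z) / pi)"
    by (simp add: rGamma_complex_of_real[symmetric] sin_of_real[symmetric])
  then have "rGamma z * rGamma (1 - z) = sin (pi * z) / pi"
    using of_real_eq_iff by blast
  moreover have "Gamma z * rGamma z = 1"
    using Gamma_real_pos[OF assms] by (simp add: Gamma_def)
  ultimately show ?thesis
    by (metis mult.assoc mult.commute mult_1)
qed

lemma one_minus_cos_le_half_square: "1 - cos (t::real) \<le> t\<^sup>2 / 2"
proof -
  have "cos t = 1 - 2 * (sin (t/2))\<^sup>2"
    using cos_double_sin[of "t/2"] by simp
  moreover have "(sin (t/2))\<^sup>2 \<le> (t/2)\<^sup>2"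
    using abs_sin_x_le_abs_x[of "t/2"] by (metis abs_ge_zero power2_abs power_mono)
  ultimately show ?thesis by (simp add: power2_eq_square)
qed

lemma exp_minus_one_le_mult_exp: "0 \<le> (y::real) \<Longrightarrow> exp y - 1 \<le> y * exp y"
proof -
  have "(1 - y) * exp y \<le> exp (-y) * exp y"
    using exp_ge_add_one_self[of "-y"] by (intro mult_right_mono) auto
  then show ?thesis by (simp add: exp_minus field_simps)
qed

lemma sum_power_abs_sin_le_exp_minus_one:
  fixes y c :: real
  assumes "0 \<le> y"
  shows "(\<Sum>n<N. y ^ n * \<bar>sin (real n * c)\<bar> / fact n) \<le> exp y - 1"
proof (cases N)
  case 0
  then show ?thesis using assms by simp
next
  case (Suc M)
  have exp_sums: "(\<lambda>n. y ^ Suc n / fact (Suc n)) sums (exp y - 1)"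
    using exp_converges[of y] sums_Suc_iff[of "\<lambda>n. y ^ n / fact n" "exp y - 1"]
    by (simp add: divide_inverse mult.commute)
  have "(\<Sum>n<N. y ^ n * \<bar>sin (real n * c)\<bar> / fact n)
        = (\<Sum>n<M. y ^ Suc n * \<bar>sin (real (Suc n) * c)\<bar> / fact (Suc n))"
    unfolding Suc sum.lessThan_Suc_shift by simp
  also have "\<dots> \<le> (\<Sum>n<M. y ^ Suc n / fact (Suc n))"
    using assms by (intro sum_mono divide_right_mono mult_left_le) auto
  also have "\<dots> \<le> exp y - 1"
    using sum_le_suminf[OF sums_summable[OF exp_sums], of "{..<M}"] sums_unique[OF exp_sums] assms
    by auto
  finally show ?thesis .
qed

text \<open>The majorant of the Gamma integrand from \<open>integrable_Gamma_integral_bound\<close>.\<close>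
definition Gamma_majorant :: "real \<Rightarrow> real \<Rightarrow> real" where
  "Gamma_majorant \<nu> r = (if r \<in> {0..1} then r powr (\<nu> - 1) else exp (- r / 2))"

lemma Gamma_majorant_integrable: "0 < \<nu> \<Longrightarrow> Gamma_majorant \<nu> integrable_on {0..}"
  using integrable_Gamma_integral_bound[of "\<nu> - 1" 1]
  by (simp add: Gamma_majorant_def[abs_def])

lemma integral_exhaustion_tendsto:
  fixes f g :: "real \<Rightarrow> real" and e R :: "nat \<Rightarrow> real"
  assumes f: "f integrable_on {0..}" and g: "g integrable_on {0..}"
    and f_le_g: "\<And>r. 0 \<le> r \<Longrightarrow> \<bar>f r\<bar> \<le> g r"
    and e: "e \<longlonglongrightarrow> 0" "\<And>k. 0 < e k" and R: "filterlim R at_top sequentially"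
  shows "(\<lambda>k. integral {e k..R k} f) \<longlonglongrightarrow> integral {0..} f"
proof -
  define fk where "fk = (\<lambda>k r. if r \<in> {e k..R k} then f r else 0)"
  define f' where "f' = (\<lambda>r. if r = 0 then 0 else f r)"
  have sub: "{e k..R k} \<inter> {0..} = {e k..R k}" for k
    using e(2)[of k] by auto
  have fk_int: "integral {0..} (fk k) = integral {e k..R k} f" for k
    unfolding fk_def integral_restrict_Int sub ..
  have fk_integrable: "fk k integrable_on {0..}" for k
    unfolding fk_def integrable_restrict_Int sub
    by (rule integrable_on_subinterval[OF f]) (use e(2)[of k] in auto)
  have fk_lim: "(\<lambda>k. fk k r) \<longlonglongrightarrow> f' r" if "r \<in> {0..}" for r
  proof (cases "r = 0")
    case True
    then show ?thesis using e(2) by (simp add: fk_def f'_def not_le[symmetric])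
  next
    case False
    then have "0 < r" using that by simp
    then have "eventually (\<lambda>k. e k < r \<and> r \<le> R k) sequentially"
      using order_tendstoD(2)[OF e(1)] R by (auto simp: filterlim_at_top eventually_conj_iff)
    then have "eventually (\<lambda>k. fk k r = f' r) sequentially"
      by eventually_elim (use False in \<open>auto simp: fk_def f'_def\<close>)
    then show ?thesis by (rule tendsto_eventually)
  qed
  have fk_le_g: "norm (fk k r) \<le> g r" if "r \<in> {0..}" for k r
    using f_le_g[of r] that by (auto simp: fk_def)
  have "f' integrable_on {0..}" "(\<lambda>k. integral {0..} (fk k)) \<longlonglongrightarrow> integral {0..} f'"
    using dominated_convergence[OF fk_integrable g fk_le_g fk_lim] by auto
  moreover have "integral {0..} f' = integral {0..} f"
    by (rule integral_spike[of "{0}"]) (auto simp: f'_def)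
  ultimately show ?thesis by (simp add: fk_int)
qed

text \<open>\<open>r\<close> ranges over \<open>[0, \<infinity>)\<close>; the junk value at \<open>r = 0\<close> is \<open>0\<close>.\<close>
definition Wright_kernel :: "real \<Rightarrow> real \<Rightarrow> real \<Rightarrow> real \<Rightarrow> real" where
  "Wright_kernel \<nu> a b r = exp (- r - a * r powr \<nu>) * sin (b * r powr \<nu>) / r"

text \<open>Expanding \<open>exp (- x e\<^sup>i\<^sup>\<pi>\<^sup>\<nu> r\<^sup>\<nu>)\<close> in the kernel gives these terms; integrated,
  they are the terms of the Wright series by the Gamma integral and the reflection formula.\<close>
definition Wright_term :: "real \<Rightarrow> real \<Rightarrow> nat \<Rightarrow> real \<Rightarrow> real" where
  "Wright_term \<nu> x n r = (- x) ^ n / fact n * (sin (pi * \<nu> * n) / pi) * (r powr (\<nu> * n - 1) / exp r)"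

lemma Wright_term_has_integral:
  assumes "0 < \<nu>"
  shows "(Wright_term \<nu> x n has_integral
          ((- x) ^ n / fact n * (sin (pi * \<nu> * n) / pi) * Gamma (\<nu> * n))) {0..}"
proof (cases "n = 0")
  case True
  then have "Wright_term \<nu> x n = (\<lambda>r. 0)"
    by (simp add: Wright_term_def fun_eq_iff)
  then show ?thesis using True by simp
next
  case False
  then have "0 < \<nu> * n" using assms by simp
  from has_integral_mult_right[OF Gamma_integral_real[OF this],
      of "(- x) ^ n / fact n * (sin (pi * \<nu> * n) / pi)"]
  show ?thesis unfolding Wright_term_def by (simp add: mult.assoc)
qed

lemma Wright_term_pos_eq:
  assumes "0 < r"
  shows "Wright_term \<nu> x n r
         = (- (x * r powr \<nu>)) ^ n * sin (real n * (pi * \<nu>)) / fact n * (1 / (pi * r * exp r))"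
proof -
  have "r powr (\<nu> * n - 1) = (r powr \<nu>) ^ n / r"
    using assms by (simp add: powr_diff powr_powr[symmetric] powr_realpow)
  moreover have "(- (x * r powr \<nu>)) ^ n = (- x) ^ n * (r powr \<nu>) ^ n"
    by (metis minus_mult_left power_mult_distrib)
  ultimately show ?thesis
    unfolding Wright_term_def by (simp add: field_simps mult.commute mult.left_commute)
qed

lemma Wright_term_sums:
  assumes "0 \<le> r"
  shows "(\<lambda>n. Wright_term \<nu> x n r)
           sums (- Wright_kernel \<nu> (x * cos (pi * \<nu>)) (x * sin (pi * \<nu>)) r / pi)"
proof (cases "r = 0")
  case True
  then show ?thesis by (simp add: Wright_term_def Wright_kernel_def)
next
  case False
  with assms have r: "0 < r" by simp
  define y where "y = x * r powr \<nu>"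
  define w where "w = complex_of_real (- y) * cis (pi * \<nu>)"
  have Im_power: "Im (w ^ n /\<^sub>R fact n) = (- y) ^ n * sin (real n * (pi * \<nu>)) / fact n" for n
  proof -
    have "w ^ n = complex_of_real ((- y) ^ n) * cis (real n * (pi * \<nu>))"
      unfolding w_def
      by (simp only: power_mult_distrib of_real_power of_real_minus) (metis Complex.DeMoivre)
    then show ?thesis by (simp add: divide_inverse mult.commute)
  qed
  have "(\<lambda>n. Im (w ^ n /\<^sub>R fact n)) sums (exp (- y * cos (pi * \<nu>)) * sin (- y * sin (pi * \<nu>)))"
    using sums_Im[OF exp_converges[of w]] by (simp add: w_def Im_exp)
  then have "(\<lambda>n. (- y) ^ n * sin (real n * (pi * \<nu>)) / fact n * (1 / (pi * r * exp r)))
               sums (exp (- y * cos (pi * \<nu>)) * sin (- y * sin (pi * \<nu>)) * (1 / (pi * r * exp r)))"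
    unfolding Im_power by (rule sums_mult2)
  moreover have "exp (- y * cos (pi * \<nu>)) * sin (- y * sin (pi * \<nu>)) * (1 / (pi * r * exp r))
      = - Wright_kernel \<nu> (x * cos (pi * \<nu>)) (x * sin (pi * \<nu>)) r / pi"
    unfolding y_def Wright_kernel_def
    by (simp add: exp_diff exp_minus field_simps mult.commute mult.left_commute)
  ultimately show ?thesis
    using Wright_term_pos_eq[OF r] by (simp add: y_def)
qed

text \<open>For \<open>r \<ge> 1\<close> the bound uses \<open>r\<^sup>\<nu> \<le> \<surd>r\<close>, i.e. \<open>\<nu> \<le> 1/2\<close>.\<close>
lemma exp_powr_minus_one_le_Gamma_majorant:
  assumes \<nu>: "0 < \<nu>" "\<nu> \<le> 1/2" and x: "0 < x" and r: "0 < r"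
  shows "(exp (x * r powr \<nu>) - 1) * (1 / (pi * r * exp r))
         \<le> (x + 1) * exp (x + x\<^sup>2 / 2) / pi * Gamma_majorant \<nu> r"
proof -
  define y where "y = x * r powr \<nu>"
  have y: "0 < y" using x r by (simp add: y_def)
  show ?thesis
  proof (cases "r \<le> 1")
    case True
    have "y \<le> x"
      using True r \<nu> powr_mono2[of \<nu> r 1] x by (simp add: y_def mult_left_le)
    then have "y \<le> x + x\<^sup>2 / 2"
      by (intro add_increasing2) auto
    have "(exp y - 1) * (1 / (pi * r * exp r)) \<le> y * exp y * (1 / (pi * r))"
      using r y exp_minus_one_le_mult_exp[of y]
      by (intro mult_mono) (auto simp: field_simps)
    also have "\<dots> = x * exp y * r powr (\<nu> - 1) / pi"
      using r by (simp add: y_def powr_diff field_simps)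
    also have "\<dots> \<le> (x + 1) * exp (x + x\<^sup>2 / 2) * r powr (\<nu> - 1) / pi"
      using \<open>y \<le> x\<close> \<open>y \<le> x + x\<^sup>2 / 2\<close> x by (intro divide_right_mono mult_right_mono mult_mono) auto
    finally show ?thesis
      using True r by (simp add: Gamma_majorant_def y_def)
  next
    case False
    have "y \<le> x * sqrt r"
      using False \<nu> powr_mono[of \<nu> "1/2" r] powr_half_sqrt[of r] x by (simp add: y_def)
    also have "\<dots> \<le> x\<^sup>2 / 2 + r / 2"
      using sum_squares_bound[of x "sqrt r"] r by simp
    finally have y_le: "y \<le> x\<^sup>2 / 2 + r / 2" .
    have "exp (x\<^sup>2 / 2) \<le> exp (x + x\<^sup>2 / 2)"
      using x by simp
    also have "\<dots> \<le> (x + 1) * exp (x + x\<^sup>2 / 2)"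
      using x by simp
    finally have exp_le: "exp (x\<^sup>2 / 2) \<le> (x + 1) * exp (x + x\<^sup>2 / 2)" .
    have "(exp y - 1) * (1 / (pi * r * exp r)) \<le> exp y * (1 / (pi * exp r))"
      using False by (intro mult_mono) (auto simp: field_simps)
    also have "\<dots> \<le> exp (x\<^sup>2 / 2 + r / 2) * (1 / (pi * exp r))"
      using y_le by (intro mult_right_mono) auto
    also have "\<dots> = exp (x\<^sup>2 / 2) * exp (- r / 2) / pi"
      by (simp add: exp_minus field_simps flip: exp_add)
    also have "\<dots> \<le> (x + 1) * exp (x + x\<^sup>2 / 2) * exp (- r / 2) / pi"
      using exp_le by (intro divide_right_mono mult_right_mono) auto
    finally show ?thesis
      using False by (simp add: Gamma_majorant_def y_def)
  qed
qed

lemma Wright_term_partial_sum_bound: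
  assumes \<nu>: "0 < \<nu>" "\<nu> \<le> 1/2" and x: "0 < x" and r: "0 \<le> r"
  shows "\<bar>\<Sum>n<N. Wright_term \<nu> x n r\<bar> \<le> (x + 1) * exp (x + x\<^sup>2 / 2) / pi * Gamma_majorant \<nu> r"
proof (cases "r = 0")
  case True
  then show ?thesis by (simp add: Wright_term_def Gamma_majorant_def)
next
  case False
  with r have r: "0 < r" by simp
  define y where "y = x * r powr \<nu>"
  have "\<bar>\<Sum>n<N. Wright_term \<nu> x n r\<bar> \<le> (\<Sum>n<N. \<bar>Wright_term \<nu> x n r\<bar>)"
    by (rule sum_abs)
  also have "\<dots> = (\<Sum>n<N. y ^ n * \<bar>sin (real n * (pi * \<nu>))\<bar> / fact n) * (1 / (pi * r * exp r))"
    unfolding sum_distrib_right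
    by (intro sum.cong refl)
      (use x r in \<open>simp add: Wright_term_pos_eq[OF r] y_def abs_mult power_abs\<close>)
  also have "\<dots> \<le> (exp y - 1) * (1 / (pi * r * exp r))"
    using r x by (intro mult_right_mono sum_power_abs_sin_le_exp_minus_one) (auto simp: y_def)
  also have "\<dots> \<le> (x + 1) * exp (x + x\<^sup>2 / 2) / pi * Gamma_majorant \<nu> r"
    unfolding y_def by (rule exp_powr_minus_one_le_Gamma_majorant[OF \<nu> x r])
  finally show ?thesis .
qed

lemma Wright_neg_integral_representation:
  assumes \<nu>: "0 < \<nu>" "\<nu> \<le> 1/2" and x: "0 < x"
  defines "f \<equiv> Wright_kernel \<nu> (x * cos (pi * \<nu>)) (x * sin (pi * \<nu>))"
  shows "f integrable_on {0..}" and "Wright (- x) (- \<nu>) 1 = 1 - integral {0..} f / pi"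
proof -
  define c where "c n = (- x) ^ n / fact n * (sin (pi * \<nu> * n) / pi) * Gamma (\<nu> * n)" for n
  define G where "G r = - f r / pi" for r
  have partial_has_integral: "((\<lambda>r. \<Sum>n<N. Wright_term \<nu> x n r) has_integral (\<Sum>n<N. c n)) {0..}" for N
    unfolding c_def by (intro has_integral_sum Wright_term_has_integral \<nu>) auto
  have majorant: "(\<lambda>r. (x + 1) * exp (x + x\<^sup>2 / 2) / pi * Gamma_majorant \<nu> r) integrable_on {0..}"
    using integrable_on_cmult_left[OF Gamma_majorant_integrable[OF \<nu>(1)],
        of "(x + 1) * exp (x + x\<^sup>2 / 2) / pi"] by simp
  have bound: "norm (\<Sum>n<N. Wright_term \<nu> x n r) \<le> (x + 1) * exp (x + x\<^sup>2 / 2) / pi * Gamma_majorant \<nu> r"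
    if "r \<in> {0..}" for N r
    using Wright_term_partial_sum_bound[OF \<nu> x, of r N] that by simp
  have pointwise: "(\<lambda>N. \<Sum>n<N. Wright_term \<nu> x n r) \<longlonglongrightarrow> G r" if "r \<in> {0..}" for r
    using Wright_term_sums[of r \<nu> x] that by (simp add: sums_def G_def f_def)
  have "G integrable_on {0..}"
    and lim: "(\<lambda>N. integral {0..} (\<lambda>r. \<Sum>n<N. Wright_term \<nu> x n r)) \<longlonglongrightarrow> integral {0..} G"
    using dominated_convergence[OF has_integral_integrable[OF partial_has_integral] majorant
        bound pointwise] by auto
  then show f_integrable: "f integrable_on {0..}"
    using integrable_on_cmult_left[of G "{0..}" "- pi"] by (simp add: G_def)
  have "c sums integral {0..} G"
    using lim unfolding sums_def integral_unique[OF partial_has_integral] .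
  moreover have "integral {0..} G = - integral {0..} f / pi"
  proof -
    have "G = (\<lambda>r. (- 1 / pi) *\<^sub>R f r)"
      by (simp add: G_def fun_eq_iff)
    then show ?thesis by simp
  qed
  ultimately have "c sums (- integral {0..} f / pi)"
    by simp
  from sums_add[OF this sums_single[of 0 "\<lambda>_. 1::real"]]
  have "(\<lambda>n. c n + (if n = 0 then 1 else 0)) sums (1 - integral {0..} f / pi)"
    by simp
  moreover have "(- x) ^ n / fact n * rGamma (- \<nu> * real n + 1) = c n + (if n = 0 then 1 else 0)" for n
    using rGamma_one_minus_real[of "\<nu> * n"] \<nu> by (cases "n = 0") (simp_all add: c_def mult.assoc)
  ultimately have "(\<lambda>n. (- x) ^ n / fact n * rGamma (- \<nu> * real n + 1)) sums (1 - integral {0..} f / pi)"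
    by simp
  then show "Wright (- x) (- \<nu>) 1 = 1 - integral {0..} f / pi"
    unfolding Wright_def by (simp add: sums_unique[symmetric])
qed

text \<open>Integration by parts against \<open>1 - cos (b r\<^sup>\<nu>) \<ge> 0\<close>: the kernel is the derivative of
  the primitive plus the remainder, and both of these are nonnegative.\<close>
definition Wright_kernel_primitive :: "real \<Rightarrow> real \<Rightarrow> real \<Rightarrow> real \<Rightarrow> real" where
  "Wright_kernel_primitive \<nu> a b r =
     exp (- r - a * r powr \<nu>) * r powr (- \<nu>) / (b * \<nu>) * (1 - cos (b * r powr \<nu>))"

definition Wright_kernel_remainder :: "real \<Rightarrow> real \<Rightarrow> real \<Rightarrow> real \<Rightarrow> real" where
  "Wright_kernel_remainder \<nu> a b r =
     exp (- r - a * r powr \<nu>) / (b * \<nu>)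
       * (r powr (- \<nu>) * (1 + a * \<nu> * r powr (\<nu> - 1)) + \<nu> * r powr (- \<nu> - 1))
       * (1 - cos (b * r powr \<nu>))"

lemma has_real_derivative_Wright_kernel_primitive:
  assumes r: "0 < r" and b: "0 < b" and \<nu>: "0 < \<nu>"
  shows "(Wright_kernel_primitive \<nu> a b has_real_derivative
           Wright_kernel \<nu> a b r - Wright_kernel_remainder \<nu> a b r) (at r)"
proof -
  define E where "E = exp (- r - a * r powr \<nu>)"
  have d_powr: "((\<lambda>r. r powr \<nu>) has_real_derivative \<nu> * r powr (\<nu> - 1)) (at r)"
    by (rule has_real_derivative_powr[OF r])
  have d_exp: "((\<lambda>r. exp (- r - a * r powr \<nu>)) has_real_derivative E * (- 1 - a * (\<nu> * r powr (\<nu> - 1)))) (at r)"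
    unfolding E_def
    by (intro DERIV_fun_exp DERIV_diff DERIV_cmult d_powr DERIV_minus DERIV_ident[THEN DERIV_cong]) auto
  have d_cos: "((\<lambda>r. 1 - cos (b * r powr \<nu>)) has_real_derivative sin (b * r powr \<nu>) * (b * (\<nu> * r powr (\<nu> - 1)))) (at r)"
    using DERIV_diff[OF DERIV_const DERIV_fun_cos[OF DERIV_cmult[OF d_powr, of b]]] by simp
  have d_front: "((\<lambda>r. exp (- r - a * r powr \<nu>) * r powr (- \<nu>) / (b * \<nu>)) has_real_derivative
      (E * (- 1 - a * (\<nu> * r powr (\<nu> - 1))) * r powr (- \<nu>) + E * (- \<nu> * r powr (- \<nu> - 1))) / (b * \<nu>)) (at r)"
    using DERIV_cdivide[OF DERIV_mult[OF d_exp has_real_derivative_powr[OF r, of "- \<nu>"]], of "b * \<nu>"]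
    by (rule DERIV_cong) (simp add: E_def algebra_simps)
  have "sin (b * r powr \<nu>) * (b * (\<nu> * r powr (\<nu> - 1))) * (exp (- r - a * r powr \<nu>) * r powr (- \<nu>) / (b * \<nu>))
        = exp (- r - a * r powr \<nu>) * sin (b * r powr \<nu>) * (r powr (- \<nu>) * r powr (\<nu> - 1))"
    using b \<nu> by (simp add: field_simps)
  also have "r powr (- \<nu>) * r powr (\<nu> - 1) = 1 / r"
    using r by (simp add: powr_add[symmetric])
  finally have kernel_part:
    "sin (b * r powr \<nu>) * (b * (\<nu> * r powr (\<nu> - 1))) * (exp (- r - a * r powr \<nu>) * r powr (- \<nu>) / (b * \<nu>))
     = Wright_kernel \<nu> a b r"
    by (simp add: Wright_kernel_def)
  have remainder_part:
    "(E * (- 1 - a * (\<nu> * r powr (\<nu> - 1))) * r powr (- \<nu>) + E * (- \<nu> * r powr (- \<nu> - 1))) / (b * \<nu>)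
       * (1 - cos (b * r powr \<nu>)) = - Wright_kernel_remainder \<nu> a b r"
    unfolding Wright_kernel_remainder_def E_def by (simp add: divide_simps algebra_simps)
  show ?thesis
    using DERIV_mult[OF d_front d_cos] unfolding kernel_part remainder_part Wright_kernel_primitive_def[abs_def]
    by (rule DERIV_cong) simp
qed

lemma Wright_kernel_primitive_bounds:
  assumes "0 \<le> a" "0 < b" "0 < \<nu>" "0 < r"
  shows "0 \<le> Wright_kernel_primitive \<nu> a b r"
    and "Wright_kernel_primitive \<nu> a b r \<le> b / (2 * \<nu>) * r powr \<nu>"
proof -
  show "0 \<le> Wright_kernel_primitive \<nu> a b r"
    unfolding Wright_kernel_primitive_def using assms by (intro mult_nonneg_nonneg divide_nonneg_nonneg) auto
  have "0 \<le> a * r powr \<nu>"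
    using assms by simp
  then have "exp (- r - a * r powr \<nu>) \<le> 1"
    unfolding exp_le_one_iff using \<open>0 < r\<close> by linarith
  then have "Wright_kernel_primitive \<nu> a b r \<le> 1 * (r powr (- \<nu>) / (b * \<nu>)) * ((b * r powr \<nu>)\<^sup>2 / 2)"
    unfolding Wright_kernel_primitive_def using assms one_minus_cos_le_half_square[of "b * r powr \<nu>"]
    by (simp only: mult.assoc times_divide_eq_right[symmetric])
      (intro mult_mono mult_nonneg_nonneg divide_nonneg_nonneg; auto)
  also have "\<dots> = b / (2 * \<nu>) * (r powr (- \<nu>) * r powr \<nu>) * r powr \<nu>"
    using assms by (simp add: power2_eq_square field_simps)
  also have "r powr (- \<nu>) * r powr \<nu> = 1"
    using assms by (simp add: powr_add[symmetric])
  finally show "Wright_kernel_primitive \<nu> a b r \<le> b / (2 * \<nu>) * r powr \<nu>"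
    by simp
qed

lemma Wright_kernel_remainder_nonneg:
  "0 \<le> a \<Longrightarrow> 0 < b \<Longrightarrow> 0 < \<nu> \<Longrightarrow> 0 < r \<Longrightarrow> 0 \<le> Wright_kernel_remainder \<nu> a b r"
  unfolding Wright_kernel_remainder_def
  by (intro mult_nonneg_nonneg divide_nonneg_nonneg add_nonneg_nonneg) auto

lemma integral_Wright_kernel_Icc:
  assumes "0 \<le> a" "0 < b" "0 < \<nu>" "0 < e" "e \<le> R"
  shows "Wright_kernel_remainder \<nu> a b integrable_on {e..R}"
    and "integral {e..R} (Wright_kernel \<nu> a b)
         = Wright_kernel_primitive \<nu> a b R - Wright_kernel_primitive \<nu> a b e
           + integral {e..R} (Wright_kernel_remainder \<nu> a b)"
proof -
  have ftc: "((\<lambda>r. Wright_kernel \<nu> a b r - Wright_kernel_remainder \<nu> a b r) has_integral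
      (Wright_kernel_primitive \<nu> a b R - Wright_kernel_primitive \<nu> a b e)) {e..R}"
  proof (rule fundamental_theorem_of_calculus[OF \<open>e \<le> R\<close>])
    fix r assume "r \<in> {e..R}"
    then have "0 < r" using assms by auto
    from has_real_derivative_Wright_kernel_primitive[OF this \<open>0 < b\<close> \<open>0 < \<nu>\<close>, of a]
    show "(Wright_kernel_primitive \<nu> a b has_vector_derivative
            Wright_kernel \<nu> a b r - Wright_kernel_remainder \<nu> a b r) (at r within {e..R})"
      unfolding has_real_derivative_iff_has_vector_derivative[symmetric]
      by (rule has_field_derivative_at_within)
  qed
  have "continuous_on {e..R} (Wright_kernel \<nu> a b)"
    using assms unfolding Wright_kernel_def by (intro continuous_intros) auto
  then have kernel_integrable: "Wright_kernel \<nu> a b integrable_on {e..R}"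
    by (rule integrable_continuous_interval)
  have "(\<lambda>r. Wright_kernel \<nu> a b r - (Wright_kernel \<nu> a b r - Wright_kernel_remainder \<nu> a b r))
          integrable_on {e..R}"
    by (rule integrable_diff[OF kernel_integrable has_integral_integrable[OF ftc]])
  then show remainder_integrable: "Wright_kernel_remainder \<nu> a b integrable_on {e..R}"
    by simp
  show "integral {e..R} (Wright_kernel \<nu> a b)
         = Wright_kernel_primitive \<nu> a b R - Wright_kernel_primitive \<nu> a b e
           + integral {e..R} (Wright_kernel_remainder \<nu> a b)"
    using integral_unique[OF ftc] integral_diff[OF kernel_integrable remainder_integrable] by simp
qed

lemma Wright_kernel_remainder_lower_bound:
  assumes a: "0 \<le> a" and b: "0 < b" and \<nu>: "0 < \<nu>" and r: "0 < r" "r \<le> s"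
    and cos_nonpos: "pi / 2 \<le> b * r powr \<nu>" "b * r powr \<nu> \<le> pi"
  shows "exp (- s - a * s powr \<nu>) / (b * \<nu>) * (\<nu> * s powr (- \<nu> - 1)) \<le> Wright_kernel_remainder \<nu> a b r"
proof -
  have "0 \<le> cos (pi - b * r powr \<nu>)"
    using cos_nonpos by (intro cos_ge_zero) auto
  then have one_le: "1 \<le> 1 - cos (b * r powr \<nu>)"
    by (simp add: cos_diff)
  have "a * r powr \<nu> \<le> a * s powr \<nu>"
    using r a \<nu> by (intro mult_left_mono powr_mono2) auto
  then have exp_le: "exp (- s - a * s powr \<nu>) \<le> exp (- r - a * r powr \<nu>)"
    using r by simp
  have "\<nu> * s powr (- \<nu> - 1) \<le> \<nu> * r powr (- \<nu> - 1)"
    using r \<nu> by (intro mult_left_mono powr_mono2') auto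
  moreover have "0 \<le> r powr (- \<nu>) * (1 + a * \<nu> * r powr (\<nu> - 1))"
    using a \<nu> by auto
  ultimately have "\<nu> * s powr (- \<nu> - 1) \<le> r powr (- \<nu>) * (1 + a * \<nu> * r powr (\<nu> - 1)) + \<nu> * r powr (- \<nu> - 1)"
    by linarith
  with exp_le have "exp (- s - a * s powr \<nu>) / (b * \<nu>) * (\<nu> * s powr (- \<nu> - 1))
      \<le> exp (- r - a * r powr \<nu>) / (b * \<nu>) * (r powr (- \<nu>) * (1 + a * \<nu> * r powr (\<nu> - 1)) + \<nu> * r powr (- \<nu> - 1))"
    using b \<nu> by (intro mult_mono divide_right_mono) auto
  also have "\<dots> \<le> Wright_kernel_remainder \<nu> a b r"
  proof -
    have "0 \<le> exp (- r - a * r powr \<nu>) / (b * \<nu>)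
                * (r powr (- \<nu>) * (1 + a * \<nu> * r powr (\<nu> - 1)) + \<nu> * r powr (- \<nu> - 1))"
      using a b \<nu> by (auto intro!: mult_nonneg_nonneg add_nonneg_nonneg divide_nonneg_nonneg)
    from mult_left_mono[OF one_le this] show ?thesis
      unfolding Wright_kernel_remainder_def by simp
  qed
  finally show ?thesis .
qed

text \<open>On \<open>[r\<^sub>0, r\<^sub>1]\<close>, where \<open>b r\<^sup>\<nu>\<close> runs through \<open>[\<pi>/2, \<pi>]\<close>, the remainder is bounded
  below by a positive constant.\<close>
lemma integral_Wright_kernel_Icc_lower_bound:
  assumes a: "0 \<le> a" and b: "0 < b" and \<nu>: "0 < \<nu>"
  obtains c r0 r1 where "0 < c" "0 < r0" "r0 < r1"
    "\<And>e R. 0 < e \<Longrightarrow> e \<le> r0 \<Longrightarrow> r1 \<le> R \<Longrightarrow>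
       c - b / (2 * \<nu>) * e powr \<nu> \<le> integral {e..R} (Wright_kernel \<nu> a b)"
proof -
  define r0 where "r0 = (pi / (2 * b)) powr (1 / \<nu>)"
  define r1 where "r1 = (pi / b) powr (1 / \<nu>)"
  define c0 where "c0 = exp (- r1 - a * r1 powr \<nu>) / (b * \<nu>) * (\<nu> * r1 powr (- \<nu> - 1))"
  have r0: "0 < r0"
    using b by (simp add: r0_def)
  have r01: "r0 < r1"
    unfolding r0_def r1_def using b \<nu> by (intro powr_less_mono2) (auto simp: field_simps)
  have b_r0: "b * r0 powr \<nu> = pi / 2" and b_r1: "b * r1 powr \<nu> = pi"
    using b \<nu> by (simp_all add: r0_def r1_def powr_powr)
  have c: "0 < c0 * (r1 - r0)"
    unfolding c0_def using b \<nu> r0 r01 by auto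
  have remainder_ge: "c0 \<le> Wright_kernel_remainder \<nu> a b r" if "r \<in> {r0..r1}" for r
    unfolding c0_def
  proof (rule Wright_kernel_remainder_lower_bound[OF a b \<nu>])
    show "0 < r" "r \<le> r1" using that r0 by auto
    have "b * r0 powr \<nu> \<le> b * r powr \<nu>" "b * r powr \<nu> \<le> b * r1 powr \<nu>"
      using that r0 b \<nu> by (auto intro!: mult_left_mono powr_mono2)
    then show "pi / 2 \<le> b * r powr \<nu>" "b * r powr \<nu> \<le> pi"
      using b_r0 b_r1 by simp_all
  qed
  have "c0 * (r1 - r0) - b / (2 * \<nu>) * e powr \<nu> \<le> integral {e..R} (Wright_kernel \<nu> a b)"
    if e: "0 < e" "e \<le> r0" and R: "r1 \<le> R" for e R
  proof -
    have sub: "{r0..r1} \<inter> {e..R} = {r0..r1}"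
      using e R by auto
    have "(\<lambda>r. if r \<in> {r0..r1} then c0 else 0) integrable_on {e..R}"
      unfolding integrable_restrict_Int sub by (rule integrable_const_ivl)
    then have "integral {e..R} (\<lambda>r. if r \<in> {r0..r1} then c0 else 0)
               \<le> integral {e..R} (Wright_kernel_remainder \<nu> a b)"
    proof (rule integral_le[OF _ integral_Wright_kernel_Icc(1)[OF a b \<nu> e(1)]])
      show "e \<le> R" using e R r01 by simp
      fix r assume "r \<in> {e..R}"
      then show "(if r \<in> {r0..r1} then c0 else 0) \<le> Wright_kernel_remainder \<nu> a b r"
        using e remainder_ge Wright_kernel_remainder_nonneg[OF a b \<nu>, of r] by auto
    qed
    moreover have "integral {e..R} (\<lambda>r. if r \<in> {r0..r1} then c0 else 0) = c0 * (r1 - r0)"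
      unfolding integral_restrict_Int sub using r01 by simp
    moreover have "0 \<le> Wright_kernel_primitive \<nu> a b R"
      and "Wright_kernel_primitive \<nu> a b e \<le> b / (2 * \<nu>) * e powr \<nu>"
      using Wright_kernel_primitive_bounds[OF a b \<nu>] e R r0 r01 by auto
    ultimately show ?thesis
      using integral_Wright_kernel_Icc(2)[OF a b \<nu> e(1), of R] e R r01 by linarith
  qed
  with c r0 r01 show ?thesis
    by (rule that)
qed

lemma abs_Wright_kernel_le:
  assumes a: "0 \<le> a" and b: "0 < b" and r: "0 \<le> r"
  shows "\<bar>Wright_kernel \<nu> a b r\<bar> \<le> (b + 1) * Gamma_majorant \<nu> r"
proof (cases "r = 0")
  case True
  then show ?thesis using b by (simp add: Wright_kernel_def Gamma_majorant_def)
next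
  case False
  with r have r: "0 < r" by simp
  have abs_eq: "\<bar>Wright_kernel \<nu> a b r\<bar> = exp (- r - a * r powr \<nu>) * \<bar>sin (b * r powr \<nu>)\<bar> / r"
    using r by (simp add: Wright_kernel_def abs_mult)
  have "0 \<le> a * r powr \<nu>"
    using a by simp
  then have exp_le: "exp (- r - a * r powr \<nu>) \<le> 1" "exp (- r - a * r powr \<nu>) \<le> exp (- r)"
    using r by simp_all
  show ?thesis
  proof (cases "r \<le> 1")
    case True
    have "\<bar>Wright_kernel \<nu> a b r\<bar> \<le> 1 * (b * r powr \<nu>) / r"
      unfolding abs_eq using r b abs_sin_x_le_abs_x[of "b * r powr \<nu>"] exp_le
      by (intro divide_right_mono mult_mono) auto
    also have "\<dots> \<le> (b + 1) * r powr \<nu> / r"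
      using r by (intro divide_right_mono mult_right_mono) auto
    also have "\<dots> = (b + 1) * r powr (\<nu> - 1)"
      using r by (simp add: powr_diff)
    finally show ?thesis
      using True r by (simp add: Gamma_majorant_def)
  next
    case False
    have "\<bar>Wright_kernel \<nu> a b r\<bar> \<le> exp (- r) * 1 / 1"
      unfolding abs_eq using False exp_le by (intro frac_le mult_mono) auto
    also have "\<dots> \<le> exp (- r / 2)"
      using False by simp
    also have "\<dots> \<le> (b + 1) * exp (- r / 2)"
      using b by simp
    finally show ?thesis
      using False by (simp add: Gamma_majorant_def)
  qed
qed

lemma integral_Wright_kernel_pos:
  assumes a: "0 \<le> a" and b: "0 < b" and \<nu>: "0 < \<nu>"
    and integrable: "Wright_kernel \<nu> a b integrable_on {0..}"
  shows "0 < integral {0..} (Wright_kernel \<nu> a b)"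
proof -
  obtain c r0 r1 where c: "0 < c" and r0: "0 < r0" "r0 < r1"
    and lower: "\<And>e R. 0 < e \<Longrightarrow> e \<le> r0 \<Longrightarrow> r1 \<le> R \<Longrightarrow>
                  c - b / (2 * \<nu>) * e powr \<nu> \<le> integral {e..R} (Wright_kernel \<nu> a b)"
    using integral_Wright_kernel_Icc_lower_bound[OF a b \<nu>] by blast
  define e where "e k = r0 / real (Suc k)" for k
  define R where "R k = r1 + real k" for k
  have e_pos: "0 < e k" and e_le: "e k \<le> r0" for k
    using r0 by (simp_all add: e_def field_simps)
  have e_lim: "e \<longlonglongrightarrow> 0"
    unfolding e_def using LIMSEQ_Suc[OF lim_const_over_n[of r0]] by simp
  have "filterlim R at_top sequentially"
    unfolding R_def by (intro filterlim_tendsto_add_at_top[OF tendsto_const] filterlim_real_sequentially)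
  moreover have "(\<lambda>r. (b + 1) * Gamma_majorant \<nu> r) integrable_on {0..}"
    using integrable_on_cmult_left[OF Gamma_majorant_integrable[OF \<nu>], of "b + 1"] by simp
  ultimately have "(\<lambda>k. integral {e k..R k} (Wright_kernel \<nu> a b)) \<longlonglongrightarrow> integral {0..} (Wright_kernel \<nu> a b)"
    using integral_exhaustion_tendsto[OF integrable _ abs_Wright_kernel_le[OF a b] e_lim e_pos] by blast
  moreover have "(\<lambda>k. c - b / (2 * \<nu>) * e k powr \<nu>) \<longlonglongrightarrow> c - b / (2 * \<nu>) * 0"
    using e_pos \<nu> by (intro tendsto_intros tendsto_zero_powrI[OF e_lim]) (auto simp: less_imp_le)
  ultimately have "c \<le> integral {0..} (Wright_kernel \<nu> a b)"
    using lower[OF e_pos e_le] by (intro LIMSEQ_le) (auto simp: R_def)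
  with c show ?thesis by simp
qed

lemma Wright_neg_lt_one:
  assumes \<nu>: "0 < \<nu>" "\<nu> \<le> 1/2" and x: "0 < x"
  shows "Wright (- x) (- \<nu>) 1 < 1"
proof -
  have "0 < pi * \<nu>" "pi * \<nu> \<le> pi / 2"
    using \<nu> by simp_all
  then have "0 \<le> cos (pi * \<nu>)" "0 < sin (pi * \<nu>)"
    using pi_gt_zero by (intro cos_ge_zero sin_gt_zero; linarith)+
  then have "0 \<le> x * cos (pi * \<nu>)" "0 < x * sin (pi * \<nu>)"
    using x by simp_all
  with Wright_neg_integral_representation[OF \<nu> x] integral_Wright_kernel_pos \<nu>
  show ?thesis by auto
qed

lemma Dirichlet_profile_eq_Robin_profile:
  fixes A P B C D w :: real
  assumes "0 < A" "0 < P" and B: "B = D - (D - C) * P * (1 / (A + P))"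
  shows "C - B = - (D - C) * A / (A + P)"
    and "B + (C - B) / A * (1 - w) = D - (D - C) * (1 - w + P) / (A + P)"
proof -
  have key: "B * (A + P) = D * A + C * P"
    using assms by (simp add: field_simps)
  then show "C - B = - (D - C) * A / (A + P)"
    using assms by (simp add: field_simps)
  show "B + (C - B) / A * (1 - w) = D - (D - C) * (1 - w + P) / (A + P)"
    using assms key by (simp add: field_simps, algebra)
qed

theorem mainTheorem2:
  fixes \<alpha> lam k m h C D B \<eta>t \<xi>t :: real
    and K H :: "real \<Rightarrow> real"
    and u1 u3 :: "real \<Rightarrow> real \<Rightarrow> real" and s1 s3 :: "real \<Rightarrow> real"
  assumes "0 < \<alpha>" "\<alpha> < 1"
    and "0 < lam" "0 < k" "0 < m" "0 < h" "C < D" "0 < D"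
    and K_def: "\<And>\<eta>. K \<eta> = \<eta> * (1 - Wright (- \<eta>) (- \<alpha> / 2) 1
                    + m / (h * lam * Gamma (1 - \<alpha> / 2))) * (1 / Mainardi (\<alpha> / 2) \<eta>)"
    and \<eta>t_pos: "0 < \<eta>t"
    and \<eta>t_sol: "K \<eta>t = k / lam\<^sup>2 * (Gamma (1 - \<alpha> / 2) / Gamma (1 + \<alpha> / 2)) * (D - C)"
    and \<eta>t_uniq: "\<And>\<eta>. 0 < \<eta> \<Longrightarrow>
          K \<eta> = k / lam\<^sup>2 * (Gamma (1 - \<alpha> / 2) / Gamma (1 + \<alpha> / 2)) * (D - C) \<Longrightarrow> \<eta> = \<eta>t"
    and B_def: "B = D - (D - C) * (m / (h * lam * Gamma (1 - \<alpha> / 2))) *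
          (1 / (1 - Wright (- \<eta>t) (- \<alpha> / 2) 1 + m / (h * lam * Gamma (1 - \<alpha> / 2))))"
    and H_def: "\<And>\<xi>. H \<xi> = \<xi> * (1 - Wright (- \<xi>) (- \<alpha> / 2) 1) * (1 / Mainardi (\<alpha> / 2) \<xi>)"
    and \<xi>t_pos: "0 < \<xi>t"
    and \<xi>t_sol: "H \<xi>t = - (k / lam\<^sup>2) * (Gamma (1 - \<alpha> / 2) / Gamma (1 + \<alpha> / 2)) * (C - B)"
    and \<xi>t_uniq: "\<And>\<xi>. 0 < \<xi> \<Longrightarrow>
          H \<xi> = - (k / lam\<^sup>2) * (Gamma (1 - \<alpha> / 2) / Gamma (1 + \<alpha> / 2)) * (C - B) \<Longrightarrow> \<xi> = \<xi>t"
    and u1_def: "\<And>x t. u1 x t = B + (C - B) / (1 - Wright (- \<xi>t) (- \<alpha> / 2) 1) *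
          (1 - Wright (- (x / (lam * t powr (\<alpha> / 2)))) (- \<alpha> / 2) 1)"
    and s1_def: "\<And>t. s1 t = lam * \<xi>t * t powr (\<alpha> / 2)"
    and u3_def: "\<And>x t. u3 x t = D - (D - C) *
          (1 - Wright (- (x / (lam * t powr (\<alpha> / 2)))) (- \<alpha> / 2) 1
             + m / (h * lam * Gamma (1 - \<alpha> / 2)))
          / (1 - Wright (- \<eta>t) (- \<alpha> / 2) 1 + m / (h * lam * Gamma (1 - \<alpha> / 2)))"
    and s3_def: "\<And>t. s3 t = lam * \<eta>t * t powr (\<alpha> / 2)"
  shows "\<xi>t = \<eta>t \<and> (\<forall>t>0. s1 t = s3 t) \<and> (\<forall>x t. 0 < t \<longrightarrow> u1 x t = u3 x t)"
proof -
  define P where "P = m / (h * lam * Gamma (1 - \<alpha> / 2))"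
  define c where "c = k / lam\<^sup>2 * (Gamma (1 - \<alpha> / 2) / Gamma (1 + \<alpha> / 2))"
  define A where "A = 1 - Wright (- \<eta>t) (- \<alpha> / 2) 1"
  have "0 < Gamma (1 - \<alpha> / 2)"
    using assms(2) by (simp add: Gamma_real_pos)
  then have P: "0 < P"
    using assms(3-6) by (simp add: P_def)
  have A: "0 < A"
    using Wright_neg_lt_one[of "\<alpha> / 2" \<eta>t] assms(1,2) \<eta>t_pos by (simp add: A_def)
  have B: "B = D - (D - C) * P * (1 / (A + P))"
    using B_def by (simp add: A_def P_def)
  have "H \<eta>t = K \<eta>t * A / (A + P)"
    using A P by (simp add: H_def K_def A_def P_def)
  also have "\<dots> = c * (D - C) * A / (A + P)"
    using \<eta>t_sol by (simp add: c_def)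
  also have "\<dots> = - c * (C - B)"
    unfolding Dirichlet_profile_eq_Robin_profile(1)[OF A P B] by (simp add: algebra_simps)
  finally have \<xi>t_eq: "\<xi>t = \<eta>t"
    using \<xi>t_uniq[OF \<eta>t_pos] by (simp add: c_def)
  show ?thesis
    using Dirichlet_profile_eq_Robin_profile(2)[OF A P B]
    by (simp add: \<xi>t_eq s1_def s3_def u1_def u3_def A_def P_def)
qed

end
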